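(* Let $n\ge 2$, $k\ge 1$ and $b\in B_n$. Then $b=h^{2k}$ for some half-twist $h\in B_n$ with $\pi(h)=(1,n)$ if and only if $b\in A_n$ and $b$ is conjugate to $a_{n-1}^k$ within $A_n$, i.e. $b=P^{-1}a_{n-1}^kP$ for some $P\in A_n$.
   Context: $B_n$ is Artin's braid group with generators $\sigma_1,\dots,\sigma_{n-1}$; $\pi:B_n\to S_n$ is the homomorphism with $\pi(\sigma_i)=(i,i+1)$. A half-twist is an element of the conjugacy class of $\sigma_1$ in $B_n$. For $1\le i\le n-1$ let $a_i=\sigma_1\cdots\sigma_{i-1}\sigma_i^2\sigma_{i-1}^{-1}\cdots\sigma_1^{-1}$, and let $A_n$ be the subgroup of $B_n$ generated by $a_1,\dots,a_{n-1}$ (the "combed braids"); $A_n$ is a free group on $a_1,\dots,a_{n-1}$. *)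

theory Defs
  imports "HOL-Algebra.Generated_Groups" "HOL-Combinatorics.Transposition"
begin

text \<open>Braid words: a letter (i, True) stands for sigma_i, (i, False) for sigma_i^-1.\<close>
type_synonym bword = "(nat \<times> bool) list"

definition valid_word :: "nat \<Rightarrow> bword \<Rightarrow> bool" where
  "valid_word n w \<longleftrightarrow> (\<forall>(i, e) \<in> set w. 1 \<le> i \<and> i < n)"

inductive braid_step :: "nat \<Rightarrow> bword \<Rightarrow> bword \<Rightarrow> bool" for n where
  cancel: "valid_word n (u @ [(i, e), (i, \<not> e)] @ v) \<Longrightarrow>
     braid_step n (u @ [(i, e), (i, \<not> e)] @ v) (u @ v)"
| comm: "Suc i < j \<Longrightarrow> valid_word n (u @ [(i, True), (j, True)] @ v) \<Longrightarrow>
     braid_step n (u @ [(i, True), (j, True)] @ v) (u @ [(j, True), (i, True)] @ v)"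
| braid: "valid_word n (u @ [(i, True), (Suc i, True), (i, True)] @ v) \<Longrightarrow>
     braid_step n (u @ [(i, True), (Suc i, True), (i, True)] @ v)
                  (u @ [(Suc i, True), (i, True), (Suc i, True)] @ v)"

definition braid_rel :: "nat \<Rightarrow> (bword \<times> bword) set" where
  "braid_rel n = {(u, v). valid_word n u \<and> (sup (braid_step n) (braid_step n)\<inverse>\<inverse>)\<^sup>*\<^sup>* u v}"

text \<open>Artin's braid group B_n = <sigma_1..sigma_(n-1) | relations> as classes of words.\<close>
definition braid_group :: "nat \<Rightarrow> bword set monoid" where
  "braid_group n = \<lparr> carrier = {w. valid_word n w} // braid_rel n,
     mult = (\<lambda>X Y. braid_rel n `` {(SOME x. x \<in> X) @ (SOME y. y \<in> Y)}),
     one = braid_rel n `` {[]} \<rparr>"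

definition sigma :: "nat \<Rightarrow> nat \<Rightarrow> bword set" where
  "sigma n i = braid_rel n `` {[(i, True)]}"

definition word_perm :: "bword \<Rightarrow> nat \<Rightarrow> nat" where
  "word_perm w = foldr (\<lambda>(i, e) p. transpose i (Suc i) \<circ> p) w id"

definition braid_perm :: "bword set \<Rightarrow> nat \<Rightarrow> nat" where
  "braid_perm X = word_perm (SOME w. w \<in> X)"

definition half_twist :: "nat \<Rightarrow> bword set \<Rightarrow> bool" where
  "half_twist n h \<longleftrightarrow> (\<exists>g \<in> carrier (braid_group n).
      h = g \<otimes>\<^bsub>braid_group n\<^esub> sigma n 1 \<otimes>\<^bsub>braid_group n\<^esub> inv\<^bsub>braid_group n\<^esub> g)"

definition a_word :: "nat \<Rightarrow> bword" where
  "a_word i = map (\<lambda>j. (j, True)) [1..<i] @ [(i, True), (i, True)]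
              @ map (\<lambda>j. (j, False)) (rev [1..<i])"

definition a_elem :: "nat \<Rightarrow> nat \<Rightarrow> bword set" where
  "a_elem n i = braid_rel n `` {a_word i}"

definition combed :: "nat \<Rightarrow> bword set set" where
  "combed n = generate (braid_group n) {a_elem n i | i. 1 \<le> i \<and> i \<le> n - 1}"

end

theory Submission
  imports Defs
begin

text \<open>
  Write \<open>W j = \<sigma>_1 \<cdots> \<sigma>_(j-1)\<close>, \<open>A\<close> for the combed braids and \<open>B = \<langle>\<sigma>_2, \<dots>, \<sigma>_(n-1)\<rangle>\<close>
  for the braids of the strands \<open>2, \<dots>, n\<close>. The braid relations show that conjugating
  \<open>a_(j-1)\<close> by \<open>\<sigma>_m\<close> or \<open>\<sigma>_m\<inverse>\<close> (\<open>m \<ge> 2\<close>) gives an \<open>A\<close>-conjugate of \<open>a_(\<tau> j - 1)\<close> with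
  \<open>\<tau> = (m, m+1)\<close>. Hence \<open>B\<close> normalises \<open>A\<close>, and \<open>\<beta> a_(j-1) \<beta>\<inverse>\<close> is \<open>A\<close>-conjugate to
  \<open>a_(\<pi>(\<beta>) j - 1)\<close> for \<open>\<beta> \<in> B\<close>. Left multiplication by \<open>\<sigma>_i\<close> or \<open>\<sigma>_i\<inverse>\<close> maps
  \<open>(W j)\<inverse> A B\<close> into \<open>(W (\<tau> j))\<inverse> A B\<close> with \<open>\<tau> = (i, i+1)\<close>, so these sets cover the
  braid group; as the permutation of every element of \<open>(W j)\<inverse> A B\<close> sends \<open>1\<close> to \<open>j\<close>,
  a braid whose permutation fixes \<open>1\<close> lies in \<open>A B\<close>.

  A half-twist \<open>h\<close> with \<open>\<pi>(h) = (1, n)\<close> is \<open>g \<sigma>_1 g\<inverse>\<close> with \<open>\<pi>(g)\<close> fixing \<open>1\<close> and sending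
  \<open>2\<close> to \<open>n\<close> (replace \<open>g\<close> by \<open>g \<sigma>_1\<close> if necessary). Writing \<open>g = P \<beta>\<close>, the square
  \<open>h\<^sup>2 = g a_1 g\<inverse>\<close> is \<open>A\<close>-conjugate to \<open>a_(n-1)\<close>. Conversely, for \<open>Q \<in> A\<close> the braid
  \<open>Q W(n-1) \<sigma>_(n-1) W(n-1)\<inverse> Q\<inverse>\<close> is a half-twist with permutation \<open>(1, n)\<close> and square
  \<open>Q a_(n-1) Q\<inverse>\<close>. Taking \<open>k\<close>-th powers gives the theorem.
\<close>

section \<open>The braid group of braid words\<close>

lemma valid_word_Nil [simp]: "valid_word n []"
  by (simp add: valid_word_def)

lemma valid_word_Cons [simp]: "valid_word n ((i, e) # w) \<longleftrightarrow> 1 \<le> i \<and> i < n \<and> valid_word n w"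
  by (auto simp: valid_word_def)

lemma valid_word_append [simp]: "valid_word n (u @ v) \<longleftrightarrow> valid_word n u \<and> valid_word n v"
  by (auto simp: valid_word_def)

lemma braid_step_valid: "braid_step n u v \<Longrightarrow> valid_word n u \<and> valid_word n v"
  by (induction rule: braid_step.induct) auto

lemma braid_step_append:
  assumes "braid_step n u v" and "valid_word n w"
  shows "braid_step n (w @ u) (w @ v)" and "braid_step n (u @ w) (v @ w)"
  using assms(1)
proof (induction rule: braid_step.induct)
  case (cancel u i e v)
  show "braid_step n (w @ u @ [(i, e), (i, \<not> e)] @ v) (w @ u @ v)"
    and "braid_step n ((u @ [(i, e), (i, \<not> e)] @ v) @ w) ((u @ v) @ w)"
    using cancel assms(2) braid_step.cancel[of n "w @ u"] braid_step.cancel[of n u i e "v @ w"]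
    by simp_all
next
  case (comm i j u v)
  show "braid_step n (w @ u @ [(i, True), (j, True)] @ v) (w @ u @ [(j, True), (i, True)] @ v)"
    and "braid_step n ((u @ [(i, True), (j, True)] @ v) @ w) ((u @ [(j, True), (i, True)] @ v) @ w)"
    using comm assms(2) braid_step.comm[of i j n "w @ u"] braid_step.comm[of i j n u "v @ w"]
    by simp_all
next
  case (braid u i v)
  show "braid_step n (w @ u @ [(i, True), (Suc i, True), (i, True)] @ v)
      (w @ u @ [(Suc i, True), (i, True), (Suc i, True)] @ v)"
    and "braid_step n ((u @ [(i, True), (Suc i, True), (i, True)] @ v) @ w)
      ((u @ [(Suc i, True), (i, True), (Suc i, True)] @ v) @ w)"
    using braid assms(2) braid_step.braid[of n "w @ u"] braid_step.braid[of n u i "v @ w"]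
    by simp_all
qed

lemma braid_rel_iff: "(u, v) \<in> braid_rel n \<longleftrightarrow> valid_word n u \<and> equivclp (braid_step n) u v"
  by (simp add: braid_rel_def equivclp_def symclp_pointfree)

lemma equivclp_braid_step_valid:
  "equivclp (braid_step n) u v \<Longrightarrow> valid_word n u \<Longrightarrow> valid_word n v"
  unfolding equivclp_def
  by (induction rule: rtranclp_induct) (auto elim: symclpE dest: braid_step_valid)

lemma equivclp_braid_step_append:
  assumes "equivclp (braid_step n) u v" and "valid_word n w"
  shows "equivclp (braid_step n) (w @ u) (w @ v) \<and> equivclp (braid_step n) (u @ w) (v @ w)"
  using assms(1) unfolding equivclp_def
proof (induction rule: rtranclp_induct)
  case (step v v')
  then have "symclp (braid_step n) (w @ v) (w @ v') \<and> symclp (braid_step n) (v @ w) (v' @ w)"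
    using braid_step_append[OF _ assms(2)] by (auto elim!: symclpE)
  then show ?case
    using step.IH by (meson rtranclp.rtrancl_into_rtrancl)
qed simp

lemma equiv_braid_rel: "equiv {w. valid_word n w} (braid_rel n)"
proof (rule equivI)
  show "refl_on {w. valid_word n w} (braid_rel n)"
    by (auto simp: refl_on_def braid_rel_iff equivclp_braid_step_valid)
  show "sym (braid_rel n)"
    by (auto simp: sym_def braid_rel_iff intro: equivclp_braid_step_valid equivp_symp)
  show "trans (braid_rel n)"
    by (auto simp: trans_def braid_rel_iff intro: equivp_transp)
  show "braid_rel n \<subseteq> {w. valid_word n w} \<times> {w. valid_word n w}"
    by (auto simp: braid_rel_iff intro: equivclp_braid_step_valid)
qed

lemma braid_step_in_braid_rel: "braid_step n u v \<Longrightarrow> (u, v) \<in> braid_rel n"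
  by (auto simp: braid_rel_iff equivclp_def dest: braid_step_valid)

lemma braid_rel_append:
  assumes "(u, u') \<in> braid_rel n" and "(v, v') \<in> braid_rel n"
  shows "(u @ v, u' @ v') \<in> braid_rel n"
proof -
  have valid: "valid_word n u" "valid_word n v" "valid_word n u'"
    using assms by (auto simp: braid_rel_iff equivclp_braid_step_valid)
  have "equivclp (braid_step n) (u @ v) (u' @ v)" "equivclp (braid_step n) (u' @ v) (u' @ v')"
    using assms valid equivclp_braid_step_append by (auto simp: braid_rel_iff)
  then show ?thesis
    using valid by (auto simp: braid_rel_iff intro: equivp_transp)
qed

abbreviation braid_class :: "nat \<Rightarrow> bword \<Rightarrow> bword set" where
  "braid_class n w \<equiv> braid_rel n `` {w}"

lemma braid_class_eq: "(u, v) \<in> braid_rel n \<Longrightarrow> braid_class n u = braid_class n v"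
  using equiv_braid_rel by (rule equiv_class_eq)

lemma braid_class_self: "valid_word n w \<Longrightarrow> w \<in> braid_class n w"
  using equiv_braid_rel by (rule equiv_class_self) simp

lemma carrier_braid_group: "carrier (braid_group n) = braid_class n ` {w. valid_word n w}"
  by (auto simp: braid_group_def quotient_def)

lemma braid_class_in_carrier [simp]: "valid_word n w \<Longrightarrow> braid_class n w \<in> carrier (braid_group n)"
  by (simp add: carrier_braid_group)

lemma one_braid_group: "\<one>\<^bsub>braid_group n\<^esub> = braid_class n []"
  by (simp add: braid_group_def)

lemma mult_braid_class [simp]:
  assumes "valid_word n u" and "valid_word n v"
  shows "braid_class n u \<otimes>\<^bsub>braid_group n\<^esub> braid_class n v = braid_class n (u @ v)"
proof -
  have "\<And>w. valid_word n w \<Longrightarrow> (w, SOME w'. w' \<in> braid_class n w) \<in> braid_rel n"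
    by (metis Image_singleton_iff braid_class_self someI)
  then have "(u @ v, (SOME u'. u' \<in> braid_class n u) @ (SOME v'. v' \<in> braid_class n v))
      \<in> braid_rel n"
    using assms braid_rel_append by blast
  then show ?thesis
    unfolding braid_group_def by (simp only: monoid.simps braid_class_eq)
qed

definition word_inv :: "bword \<Rightarrow> bword" where
  "word_inv w = rev (map (\<lambda>(i, e). (i, \<not> e)) w)"

lemma word_inv_simps [simp]:
  "word_inv [] = []"
  "word_inv ((i, e) # w) = word_inv w @ [(i, \<not> e)]"
  by (simp_all add: word_inv_def)

lemma word_inv_append [simp]: "word_inv (u @ v) = word_inv v @ word_inv u"
  by (simp add: word_inv_def)

lemma word_inv_word_inv [simp]: "word_inv (word_inv w) = w"
  by (induction w) auto

lemma valid_word_inv [simp]: "valid_word n (word_inv w) \<longleftrightarrow> valid_word n w"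
  by (induction w) auto

lemma braid_rel_append_word_inv: "valid_word n w \<Longrightarrow> (w @ word_inv w, []) \<in> braid_rel n"
proof (induction w)
  case (Cons l w)
  obtain i e where l: "l = (i, e)" by fastforce
  have refl: "\<And>u. valid_word n u \<Longrightarrow> (u, u) \<in> braid_rel n"
    by (simp add: braid_rel_iff)
  have "([l] @ (w @ word_inv w) @ [(i, \<not> e)], [l] @ [] @ [(i, \<not> e)]) \<in> braid_rel n"
    using Cons by (intro braid_rel_append refl) (simp_all add: l)
  moreover have "braid_step n ([] @ [(i, e), (i, \<not> e)] @ []) ([] @ [])"
    using Cons.prems by (intro braid_step.cancel) (simp add: l)
  then have "([l] @ [] @ [(i, \<not> e)], []) \<in> braid_rel n"
    by (auto simp: l braid_rel_iff dest: braid_step_valid)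
  ultimately show ?case
    using equiv_braid_rel by (simp add: l) (meson equivE transE)
qed (simp add: braid_rel_iff)

theorem group_braid_group: "group (braid_group n)"
proof (rule groupI)
  show "x \<otimes>\<^bsub>braid_group n\<^esub> y \<in> carrier (braid_group n)"
    if "x \<in> carrier (braid_group n)" "y \<in> carrier (braid_group n)" for x y
    using that by (auto simp: carrier_braid_group)
  show "\<one>\<^bsub>braid_group n\<^esub> \<in> carrier (braid_group n)"
    by (simp add: one_braid_group)
  show "x \<otimes>\<^bsub>braid_group n\<^esub> y \<otimes>\<^bsub>braid_group n\<^esub> z =
      x \<otimes>\<^bsub>braid_group n\<^esub> (y \<otimes>\<^bsub>braid_group n\<^esub> z)"
    if "x \<in> carrier (braid_group n)" "y \<in> carrier (braid_group n)" "z \<in> carrier (braid_group n)"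
    for x y z
    using that by (auto simp: carrier_braid_group)
  show "\<one>\<^bsub>braid_group n\<^esub> \<otimes>\<^bsub>braid_group n\<^esub> x = x" if "x \<in> carrier (braid_group n)" for x
    using that by (auto simp: carrier_braid_group one_braid_group)
  show "\<exists>y \<in> carrier (braid_group n). y \<otimes>\<^bsub>braid_group n\<^esub> x = \<one>\<^bsub>braid_group n\<^esub>"
    if x: "x \<in> carrier (braid_group n)" for x
  proof -
    obtain w where w: "valid_word n w" "x = braid_class n w"
      using x by (auto simp: carrier_braid_group)
    have "braid_class n (word_inv w) \<otimes>\<^bsub>braid_group n\<^esub> x = \<one>\<^bsub>braid_group n\<^esub>"
      using w braid_rel_append_word_inv[of n "word_inv w"]
      by (simp add: one_braid_group braid_class_eq)
    then show ?thesis
      using w by (intro bexI[of _ "braid_class n (word_inv w)"]) simp_all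
  qed
qed

lemma inv_braid_class:
  assumes "valid_word n w"
  shows "inv\<^bsub>braid_group n\<^esub> (braid_class n w) = braid_class n (word_inv w)"
proof -
  interpret group "braid_group n" by (rule group_braid_group)
  show ?thesis
    using assms braid_rel_append_word_inv[of n "word_inv w"]
    by (intro inv_equality) (simp_all add: one_braid_group braid_class_eq)
qed

lemma word_perm_simps [simp]:
  "word_perm [] = id"
  "word_perm ((i, e) # w) = transpose i (Suc i) \<circ> word_perm w"
  by (simp_all add: word_perm_def)

lemma word_perm_append: "word_perm (u @ v) = word_perm u \<circ> word_perm v"
  by (induction u) auto

lemma braid_step_word_perm: "braid_step n u v \<Longrightarrow> word_perm u = word_perm v"
proof (induction rule: braid_step.induct)
  case (comm i j u v)
  then have "transpose i (Suc i) (transpose j (Suc j) x)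
      = transpose j (Suc j) (transpose i (Suc i) x)" for x
    by (auto simp: transpose_def)
  then show ?case
    by (simp add: word_perm_append comp_def)
next
  case (braid u i v)
  have "transpose i (Suc i) (transpose (Suc i) (Suc (Suc i)) (transpose i (Suc i) x))
      = transpose (Suc i) (Suc (Suc i)) (transpose i (Suc i) (transpose (Suc i) (Suc (Suc i)) x))"
    for x
    by (auto simp: transpose_def)
  then show ?case
    by (simp add: word_perm_append comp_def)
qed (simp add: word_perm_append flip: comp_assoc)

lemma braid_rel_word_perm: "(u, v) \<in> braid_rel n \<Longrightarrow> word_perm u = word_perm v"
  unfolding braid_rel_iff equivclp_def
  by (auto elim!: rtranclp_induct symclpE dest: braid_step_word_perm)

lemma braid_perm_class [simp]: "valid_word n w \<Longrightarrow> braid_perm (braid_class n w) = word_perm w"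
  unfolding braid_perm_def
  by (metis Image_singleton_iff braid_class_self braid_rel_word_perm someI)

lemma transpose_conj:
  assumes "\<And>x. f' (f x) = x" "\<And>y. f (f' y) = y"
  shows "f \<circ> transpose a b \<circ> f' = transpose (f a) (f b)"
proof
  fix y
  have inj: "f x = f x' \<longleftrightarrow> x = x'" for x x'
    using assms(1) by metis
  have "(f \<circ> transpose a b \<circ> f') (f (f' y)) = transpose (f a) (f b) (f (f' y))"
    using assms(1) by (simp add: transpose_def inj)
  then show "(f \<circ> transpose a b \<circ> f') y = transpose (f a) (f b) y"
    by (simp only: assms(2))
qed

lemma transpose_moves:
  "transpose a b u = v \<Longrightarrow> u \<noteq> v \<Longrightarrow> u = a \<and> v = b \<or> u = b \<and> v = a"
  by (auto simp: transpose_def split: if_splits)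

section \<open>Conjugation in groups\<close>

context group
begin

lemma inv_mult_cancel_left [simp]: "x \<in> carrier G \<Longrightarrow> y \<in> carrier G \<Longrightarrow> inv x \<otimes> (x \<otimes> y) = y"
  by (simp flip: m_assoc)

lemma mult_inv_cancel_left [simp]: "x \<in> carrier G \<Longrightarrow> y \<in> carrier G \<Longrightarrow> x \<otimes> (inv x \<otimes> y) = y"
  by (simp flip: m_assoc)

lemma intertwine_inv:
  assumes "x \<in> carrier G" "w \<in> carrier G" "y \<in> carrier G" and "x \<otimes> w = w \<otimes> y"
  shows "y \<otimes> inv w = inv w \<otimes> x" and "inv x \<otimes> w = w \<otimes> inv y"
proof -
  have "inv w \<otimes> x = inv w \<otimes> (x \<otimes> w) \<otimes> inv w"
    using assms(1,2) by (simp add: m_assoc)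
  also have "\<dots> = y \<otimes> inv w"
    using assms by (simp add: m_assoc)
  finally show "y \<otimes> inv w = inv w \<otimes> x" ..
  have "inv x \<otimes> w = inv x \<otimes> (w \<otimes> y) \<otimes> inv y"
    using assms(1,2,3) by (simp add: m_assoc)
  also have "\<dots> = w \<otimes> inv y"
    using assms by (simp add: m_assoc flip: assms(4))
  finally show "inv x \<otimes> w = w \<otimes> inv y" .
qed

lemma intertwine_inv_inv:
  assumes "x \<in> carrier G" "w \<in> carrier G" "y \<in> carrier G" and "x \<otimes> w = w \<otimes> y"
  shows "inv y \<otimes> inv w = inv w \<otimes> inv x"
  using assms by (metis inv_mult_group)

lemma conj_intertwine:
  assumes "g \<in> carrier G" "g' \<in> carrier G" "w \<in> carrier G" "c \<in> carrier G" and "g \<otimes> w = w \<otimes> g'"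
  shows "g \<otimes> (w \<otimes> c \<otimes> inv w) \<otimes> inv g = w \<otimes> (g' \<otimes> c \<otimes> inv g') \<otimes> inv w"
proof -
  have "g \<otimes> (w \<otimes> c \<otimes> inv w) \<otimes> inv g = (g \<otimes> w) \<otimes> c \<otimes> inv (g \<otimes> w)"
    using assms(1,3,4) by (simp add: m_assoc inv_mult_group)
  also have "\<dots> = w \<otimes> (g' \<otimes> c \<otimes> inv g') \<otimes> inv w"
    using assms by (simp add: m_assoc inv_mult_group)
  finally show ?thesis .
qed

lemma conj_square_commuting:
  assumes "x \<in> carrier G" "y \<in> carrier G" "x \<otimes> y = y \<otimes> x"
  shows "x \<otimes> (y \<otimes> y) \<otimes> inv x = y \<otimes> y"
proof -
  have "x \<otimes> y \<otimes> inv x = y"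
    using assms by (metis inv_closed m_assoc r_inv r_one)
  moreover have "x \<otimes> (y \<otimes> y) \<otimes> inv x = (x \<otimes> y \<otimes> inv x) \<otimes> (x \<otimes> y \<otimes> inv x)"
    using assms(1,2) by (simp add: m_assoc)
  ultimately show ?thesis
    by simp
qed

lemma inv_conj_fixed:
  assumes "x \<in> carrier G" "y \<in> carrier G" "x \<otimes> y \<otimes> inv x = y"
  shows "inv x \<otimes> y \<otimes> x = y"
proof -
  have "inv x \<otimes> y \<otimes> x = inv x \<otimes> (x \<otimes> y \<otimes> inv x) \<otimes> x"
    by (simp only: assms(3))
  also have "\<dots> = y"
    using assms(1,2) by (simp add: m_assoc)
  finally show ?thesis .
qed

lemma braid_relation_conj_square:
  assumes "x \<in> carrier G" "y \<in> carrier G" "x \<otimes> y \<otimes> x = y \<otimes> x \<otimes> y"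
  shows "inv y \<otimes> (x \<otimes> x) \<otimes> y = x \<otimes> (y \<otimes> y) \<otimes> inv x"
proof -
  have "inv y \<otimes> x \<otimes> y = inv y \<otimes> (x \<otimes> y \<otimes> x) \<otimes> inv x"
    using assms(1,2) by (simp add: m_assoc)
  also have "\<dots> = x \<otimes> y \<otimes> inv x"
    using assms by (simp add: m_assoc)
  finally have "inv y \<otimes> x \<otimes> y = x \<otimes> y \<otimes> inv x" .
  then have "(inv y \<otimes> x \<otimes> y) \<otimes> (inv y \<otimes> x \<otimes> y) = (x \<otimes> y \<otimes> inv x) \<otimes> (x \<otimes> y \<otimes> inv x)"
    by simp
  then show ?thesis
    using assms(1,2) by (simp add: m_assoc)
qed

lemma braid_relation_commute:
  assumes "x \<in> carrier G" "y \<in> carrier G" "x \<otimes> y \<otimes> x = y \<otimes> x \<otimes> y"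
  shows "y \<otimes> (x \<otimes> y \<otimes> y \<otimes> x) \<otimes> inv y = x \<otimes> y \<otimes> y \<otimes> x"
proof -
  have "y \<otimes> (x \<otimes> y \<otimes> y \<otimes> x) \<otimes> inv y = (y \<otimes> x \<otimes> y) \<otimes> (y \<otimes> x) \<otimes> inv y"
    using assms(1,2) by (simp add: m_assoc)
  also have "\<dots> = (x \<otimes> y) \<otimes> (x \<otimes> y \<otimes> x) \<otimes> inv y"
    using assms by (simp add: m_assoc flip: assms(3))
  also have "\<dots> = x \<otimes> y \<otimes> y \<otimes> x"
    using assms by (simp add: m_assoc)
  finally show ?thesis .
qed

lemma braid_relation_conjugate:
  assumes "x \<in> carrier G" "y \<in> carrier G" "x \<otimes> y \<otimes> x = y \<otimes> x \<otimes> y"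
  shows "y = (x \<otimes> y) \<otimes> x \<otimes> inv (x \<otimes> y)"
proof -
  have "(x \<otimes> y) \<otimes> x \<otimes> inv (x \<otimes> y) = (y \<otimes> x \<otimes> y) \<otimes> inv y \<otimes> inv x"
    using assms by (simp add: m_assoc inv_mult_group flip: assms(3))
  also have "\<dots> = y"
    using assms(1,2) by (simp add: m_assoc)
  finally show ?thesis ..
qed

lemma conj_of_commuting_product:
  assumes "s \<in> carrier G" "u \<in> carrier G" "v \<in> carrier G"
    and "inv s \<otimes> u \<otimes> s = v" and "s \<otimes> (v \<otimes> u) \<otimes> inv s = v \<otimes> u"
  shows "s \<otimes> u \<otimes> inv s = inv u \<otimes> v \<otimes> u" and "inv s \<otimes> v \<otimes> s = v \<otimes> u \<otimes> inv v"
proof -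
  have u: "s \<otimes> v \<otimes> inv s = u"
    using assms(1-3) by (simp add: m_assoc flip: assms(4))
  have "s \<otimes> u \<otimes> inv s = s \<otimes> inv v \<otimes> inv s \<otimes> (s \<otimes> (v \<otimes> u) \<otimes> inv s)"
    using assms(1-3) by (simp add: m_assoc)
  also have "\<dots> = inv (s \<otimes> v \<otimes> inv s) \<otimes> (v \<otimes> u)"
    using assms by (simp add: m_assoc inv_mult_group)
  finally have "s \<otimes> u \<otimes> inv s = inv u \<otimes> (v \<otimes> u)"
    by (simp only: u)
  then show "s \<otimes> u \<otimes> inv s = inv u \<otimes> v \<otimes> u"
    using assms(1-3) by (simp add: m_assoc)
  have "inv s \<otimes> (v \<otimes> u) \<otimes> s = inv s \<otimes> (s \<otimes> (v \<otimes> u) \<otimes> inv s) \<otimes> s"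
    by (simp only: assms(5))
  also have "\<dots> = v \<otimes> u"
    using assms(1-3) by (simp add: m_assoc)
  finally have vu: "inv s \<otimes> (v \<otimes> u) \<otimes> s = v \<otimes> u" .
  have "inv s \<otimes> v \<otimes> s = inv s \<otimes> (v \<otimes> u) \<otimes> s \<otimes> (inv s \<otimes> inv u \<otimes> s)"
    using assms(1-3) by (simp add: m_assoc)
  also have "\<dots> = v \<otimes> u \<otimes> inv (inv s \<otimes> u \<otimes> s)"
    using assms(1-3) by (simp add: vu m_assoc inv_mult_group)
  finally have "inv s \<otimes> v \<otimes> s = v \<otimes> u \<otimes> inv (inv s \<otimes> u \<otimes> s)" .
  then show "inv s \<otimes> v \<otimes> s = v \<otimes> u \<otimes> inv v"
    by (simp only: assms(4))
qed

lemma nat_pow_conj: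
  assumes "g \<in> carrier G" "x \<in> carrier G"
  shows "(g \<otimes> x \<otimes> inv g) [^] (k::nat) = g \<otimes> x [^] k \<otimes> inv g"
  using assms by (induction k) (simp_all add: m_assoc)

lemma subgroup_nat_pow_closed: "subgroup H G \<Longrightarrow> x \<in> H \<Longrightarrow> x [^] (k::nat) \<in> H"
  by (induction k) (simp_all add: subgroup.one_closed subgroup.m_closed)

definition conjugate_in :: "'a set \<Rightarrow> 'a \<Rightarrow> 'a \<Rightarrow> bool" where
  "conjugate_in H x y \<longleftrightarrow> (\<exists>Q \<in> H. y = Q \<otimes> x \<otimes> inv Q)"

lemma conjugate_inI: "Q \<in> H \<Longrightarrow> conjugate_in H x (Q \<otimes> x \<otimes> inv Q)"
  unfolding conjugate_in_def by blast

lemma conjugate_in_refl: "subgroup H G \<Longrightarrow> x \<in> carrier G \<Longrightarrow> conjugate_in H x x"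
  unfolding conjugate_in_def by (metis inv_one l_one r_one subgroup.one_closed)

lemma conjugate_in_mem:
  "subgroup H G \<Longrightarrow> x \<in> H \<Longrightarrow> conjugate_in H x y \<Longrightarrow> y \<in> H"
  unfolding conjugate_in_def by (metis subgroup.m_closed subgroup.m_inv_closed)

lemma conjugate_in_trans:
  assumes "subgroup H G" "x \<in> carrier G" "conjugate_in H x y" "conjugate_in H y z"
  shows "conjugate_in H x z"
proof -
  obtain Q where Q: "Q \<in> H" "y = Q \<otimes> x \<otimes> inv Q"
    using assms(3) conjugate_in_def by metis
  obtain R where R: "R \<in> H" "z = R \<otimes> y \<otimes> inv R"
    using assms(4) conjugate_in_def by metis
  have "Q \<in> carrier G" "R \<in> carrier G"
    using Q(1) R(1) subgroup.mem_carrier[OF assms(1)] by simp_all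
  then have "z = (R \<otimes> Q) \<otimes> x \<otimes> inv (R \<otimes> Q)"
    using Q(2) R(2) assms(2) by (simp add: m_assoc inv_mult_group)
  moreover have "R \<otimes> Q \<in> H"
    using subgroup.m_closed[OF assms(1) R(1) Q(1)] .
  ultimately show ?thesis
    unfolding conjugate_in_def by blast
qed

lemma conjugate_in_conj:
  assumes "subgroup H G" "g \<in> carrier G" "x \<in> carrier G"
    and "\<And>Q. Q \<in> H \<Longrightarrow> g \<otimes> Q \<otimes> inv g \<in> H"
    and "conjugate_in H x y"
  shows "conjugate_in H (g \<otimes> x \<otimes> inv g) (g \<otimes> y \<otimes> inv g)"
proof -
  obtain Q where Q: "Q \<in> H" "y = Q \<otimes> x \<otimes> inv Q"
    using assms(5) unfolding conjugate_in_def by blast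
  then have "Q \<in> carrier G"
    using subgroup.mem_carrier[OF assms(1)] by simp
  then have "g \<otimes> y \<otimes> inv g = (g \<otimes> Q \<otimes> inv g) \<otimes> (g \<otimes> x \<otimes> inv g) \<otimes> inv (g \<otimes> Q \<otimes> inv g)"
    using Q assms(2,3) by (simp add: m_assoc inv_mult_group)
  then show ?thesis
    using Q assms(4) by (auto simp: conjugate_in_def)
qed

lemma conjugate_in_pow:
  assumes "subgroup H G" "x \<in> carrier G" "conjugate_in H x y"
  shows "conjugate_in H (x [^] (k::nat)) (y [^] k)"
proof -
  obtain Q where Q: "Q \<in> H" "y = Q \<otimes> x \<otimes> inv Q"
    using assms(3) unfolding conjugate_in_def by blast
  then have "y [^] k = Q \<otimes> x [^] k \<otimes> inv Q"
    using assms(2) nat_pow_conj subgroup.mem_carrier[OF assms(1)] by simp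
  then show ?thesis
    using Q(1) by (auto simp: conjugate_in_def)
qed

lemma conjugate_in_nat_pow_iff:
  assumes "subgroup H G" "x \<in> carrier G"
  shows "(\<exists>y. conjugate_in H x y \<and> z = y [^] (k::nat)) \<longleftrightarrow> conjugate_in H (x [^] k) z"
proof
  assume "\<exists>y. conjugate_in H x y \<and> z = y [^] k"
  then show "conjugate_in H (x [^] k) z"
    using conjugate_in_pow[OF assms] by blast
next
  assume "conjugate_in H (x [^] k) z"
  then obtain Q where Q: "Q \<in> H" "z = Q \<otimes> x [^] k \<otimes> inv Q"
    unfolding conjugate_in_def by blast
  then have "z = (Q \<otimes> x \<otimes> inv Q) [^] k"
    using nat_pow_conj subgroup.mem_carrier[OF assms(1)] assms(2) by simp
  then show "\<exists>y. conjugate_in H x y \<and> z = y [^] k"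
    using conjugate_inI[OF Q(1)] by blast
qed

lemma conjugate_in_iff_inv:
  assumes "subgroup H G" "x \<in> H"
  shows "conjugate_in H x z \<longleftrightarrow> z \<in> H \<and> (\<exists>P \<in> H. z = inv P \<otimes> x \<otimes> P)"
proof
  assume z: "conjugate_in H x z"
  then obtain Q where "Q \<in> H" "z = Q \<otimes> x \<otimes> inv Q"
    unfolding conjugate_in_def by blast
  then have "inv Q \<in> H" "z = inv (inv Q) \<otimes> x \<otimes> inv Q"
    using subgroup.m_inv_closed[OF assms(1)] subgroup.mem_carrier[OF assms(1)] by simp_all
  then show "z \<in> H \<and> (\<exists>P \<in> H. z = inv P \<otimes> x \<otimes> P)"
    using conjugate_in_mem[OF assms z] by blast
next
  assume "z \<in> H \<and> (\<exists>P \<in> H. z = inv P \<otimes> x \<otimes> P)"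
  then obtain P where "P \<in> H" "z = inv P \<otimes> x \<otimes> inv (inv P)"
    using subgroup.mem_carrier[OF assms(1)] by auto
  then show "conjugate_in H x z"
    using conjugate_inI subgroup.m_inv_closed[OF assms(1)] by metis
qed

lemma generate_conj_closed:
  assumes "g \<in> carrier G" "S \<subseteq> carrier G"
    and "\<And>s. s \<in> S \<Longrightarrow> g \<otimes> s \<otimes> inv g \<in> generate G S"
    and "P \<in> generate G S"
  shows "g \<otimes> P \<otimes> inv g \<in> generate G S"
  using assms(4)
proof (induction rule: generate.induct)
  case one
  then show ?case
    using assms(1) by (simp add: generate.one)
next
  case (incl s)
  then show ?case by (rule assms(3))
next
  case (inv s)
  have "inv (g \<otimes> s \<otimes> inv g) \<in> generate G S"
    using subgroup.m_inv_closed[OF generate_is_subgroup[OF assms(2)] assms(3)[OF inv]] .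
  moreover have "g \<otimes> inv s \<otimes> inv g = inv (g \<otimes> s \<otimes> inv g)"
    using assms(1,2) inv by (auto simp: m_assoc inv_mult_group)
  ultimately show ?case
    by (simp only:)
next
  case (eng P1 P2)
  have "P1 \<in> carrier G" "P2 \<in> carrier G"
    using eng.hyps generate_in_carrier[OF assms(2)] by simp_all
  then have "g \<otimes> (P1 \<otimes> P2) \<otimes> inv g = (g \<otimes> P1 \<otimes> inv g) \<otimes> (g \<otimes> P2 \<otimes> inv g)"
    using assms(1) by (simp add: m_assoc)
  then show ?case
    using eng.IH generate.eng by metis
qed

lemma generate_normalizes:
  assumes "subgroup H G" "T \<subseteq> carrier G"
    and "\<And>t P. t \<in> T \<Longrightarrow> P \<in> H \<Longrightarrow> t \<otimes> P \<otimes> inv t \<in> H \<and> inv t \<otimes> P \<otimes> t \<in> H"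
    and "\<beta> \<in> generate G T" "P \<in> H"
  shows "\<beta> \<otimes> P \<otimes> inv \<beta> \<in> H"
  using assms(4,5)
proof (induction arbitrary: P rule: generate.induct)
  case one
  then show ?case
    using subgroup.mem_carrier[OF assms(1)] by simp
next
  case (incl t)
  then show ?case using assms(3) by blast
next
  case (inv t)
  then have "t \<in> carrier G"
    using assms(2) by blast
  moreover have "inv t \<otimes> P \<otimes> t \<in> H"
    using assms(3) inv by blast
  ultimately show ?case
    by (simp only: inv_inv)
next
  case (eng \<beta>1 \<beta>2)
  have "\<beta>1 \<in> carrier G" "\<beta>2 \<in> carrier G" "P \<in> carrier G"
    using eng generate_in_carrier[OF assms(2)] subgroup.mem_carrier[OF assms(1)] by simp_all
  then have "\<beta>1 \<otimes> \<beta>2 \<otimes> P \<otimes> inv (\<beta>1 \<otimes> \<beta>2) = \<beta>1 \<otimes> (\<beta>2 \<otimes> P \<otimes> inv \<beta>2) \<otimes> inv \<beta>1"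
    by (simp add: m_assoc inv_mult_group)
  then show ?case
    using eng by simp
qed

end

section \<open>Artin generators, combed braids and their conjugation\<close>

text \<open>
  The braid group is a structure parameter of the locale, so that the notation of
  HOL-Algebra (\<open>\<otimes>\<close>, \<open>inv\<close>, \<open>\<one>\<close>, \<open>[^]\<close>) refers to it.
\<close>

locale braids = group G for G :: "bword set monoid" (structure) +
  fixes n :: nat
  assumes G_eq: "G = braid_group n"
    and two_le_n: "2 \<le> n"
begin

abbreviation \<sigma> :: "nat \<Rightarrow> bword set" where
  "\<sigma> i \<equiv> sigma n i"

lemma sigma_closed [simp]: "1 \<le> i \<Longrightarrow> i < n \<Longrightarrow> \<sigma> i \<in> carrier G"
  by (simp add: G_eq sigma_def)

lemma inv_sigma: "1 \<le> i \<Longrightarrow> i < n \<Longrightarrow> inv (\<sigma> i) = braid_class n [(i, False)]"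
  by (simp add: G_eq sigma_def inv_braid_class)

lemma sigma_commute: "1 \<le> i \<Longrightarrow> Suc i < j \<Longrightarrow> j < n \<Longrightarrow> \<sigma> i \<otimes> \<sigma> j = \<sigma> j \<otimes> \<sigma> i"
  using braid_step.comm[of i j n "[]" "[]"]
  by (simp add: G_eq sigma_def braid_class_eq braid_step_in_braid_rel)

lemma sigma_braid:
  "1 \<le> i \<Longrightarrow> Suc i < n \<Longrightarrow> \<sigma> i \<otimes> \<sigma> (Suc i) \<otimes> \<sigma> i = \<sigma> (Suc i) \<otimes> \<sigma> i \<otimes> \<sigma> (Suc i)"
  using braid_step.braid[of n "[]" i "[]"]
  by (simp add: G_eq sigma_def braid_class_eq braid_step_in_braid_rel)

lemma braid_perm_mult:
  "x \<in> carrier G \<Longrightarrow> y \<in> carrier G \<Longrightarrow> braid_perm (x \<otimes> y) = braid_perm x \<circ> braid_perm y"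
  by (auto simp: G_eq carrier_braid_group word_perm_append)

lemma braid_perm_one [simp]: "braid_perm \<one> = id"
  by (simp add: G_eq one_braid_group)

lemma braid_perm_inv_apply [simp]:
  assumes "x \<in> carrier G"
  shows "braid_perm (inv x) (braid_perm x j) = j" and "braid_perm x (braid_perm (inv x) j) = j"
  using braid_perm_mult[of "inv x" x] braid_perm_mult[of x "inv x"] assms
  by (simp_all add: fun_eq_iff)

lemma braid_perm_sigma [simp]: "1 \<le> i \<Longrightarrow> i < n \<Longrightarrow> braid_perm (\<sigma> i) = transpose i (Suc i)"
  by (simp add: sigma_def)

lemma braid_perm_inv_sigma [simp]: "1 \<le> i \<Longrightarrow> i < n \<Longrightarrow> braid_perm (inv (\<sigma> i)) = transpose i (Suc i)"
  by (simp add: inv_sigma)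

definition sigma_prefix :: "nat \<Rightarrow> bword set" where
  "sigma_prefix j = braid_class n (map (\<lambda>i. (i, True)) [1..<j])"

lemma valid_word_sigma_prefix: "j \<le> n \<Longrightarrow> valid_word n (map (\<lambda>i. (i, True)) [1..<j])"
  by (auto simp: valid_word_def)

lemma sigma_prefix_closed [simp]: "j \<le> n \<Longrightarrow> sigma_prefix j \<in> carrier G"
  unfolding sigma_prefix_def G_eq by (rule braid_class_in_carrier[OF valid_word_sigma_prefix])

lemma sigma_prefix_le_one [simp]: "j \<le> 1 \<Longrightarrow> sigma_prefix j = \<one>"
  by (simp add: sigma_prefix_def G_eq one_braid_group)

lemma sigma_prefix_Suc: "1 \<le> j \<Longrightarrow> j < n \<Longrightarrow> sigma_prefix (Suc j) = sigma_prefix j \<otimes> \<sigma> j"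
  using valid_word_sigma_prefix[of j] by (simp add: sigma_prefix_def sigma_def G_eq)

lemma braid_perm_sigma_prefix:
  assumes "j \<le> n"
  shows "1 \<le> j \<Longrightarrow> braid_perm (sigma_prefix j) j = 1"
    and "j < x \<Longrightarrow> braid_perm (sigma_prefix j) x = x"
proof -
  have "word_perm (map (\<lambda>i. (i, True)) [1..<j]) j = 1 \<or> j = 0"
    and "j < x \<Longrightarrow> word_perm (map (\<lambda>i. (i, True)) [1..<j]) x = x"
    by (induction j) (auto simp: word_perm_append)
  then show "1 \<le> j \<Longrightarrow> braid_perm (sigma_prefix j) j = 1"
    and "j < x \<Longrightarrow> braid_perm (sigma_prefix j) x = x"
    using valid_word_sigma_prefix[OF assms] by (auto simp: sigma_prefix_def)
qed

lemma sigma_commute_sigma_prefix: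
  assumes "j < m" "m < n"
  shows "\<sigma> m \<otimes> sigma_prefix j = sigma_prefix j \<otimes> \<sigma> m"
  using assms
proof (induction j)
  case (Suc j)
  show ?case
  proof (cases "j = 0")
    case False
    then have "\<sigma> m \<otimes> sigma_prefix (Suc j) = sigma_prefix j \<otimes> (\<sigma> m \<otimes> \<sigma> j)"
      using Suc by (simp add: sigma_prefix_Suc m_assoc flip: m_assoc)
    also have "\<dots> = sigma_prefix (Suc j) \<otimes> \<sigma> m"
      using Suc False sigma_commute[of j m] by (simp add: sigma_prefix_Suc m_assoc)
    finally show ?thesis .
  qed (use Suc.prems in simp)
qed simp

lemma sigma_shift_sigma_prefix:
  assumes "1 \<le> k" "Suc k < j" "j \<le> n"
  shows "\<sigma> (Suc k) \<otimes> sigma_prefix j = sigma_prefix j \<otimes> \<sigma> k"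
  using assms(2,3)
proof (induction j)
  case (Suc j)
  have "sigma_prefix (Suc j) = sigma_prefix j \<otimes> \<sigma> j"
    using assms(1) Suc.prems by (simp add: sigma_prefix_Suc)
  show ?case
  proof (cases "j = Suc k")
    case True
    have "\<sigma> (Suc k) \<otimes> sigma_prefix (Suc j)
        = sigma_prefix k \<otimes> (\<sigma> (Suc k) \<otimes> \<sigma> k \<otimes> \<sigma> (Suc k))"
      using True assms(1) Suc.prems sigma_commute_sigma_prefix[of k "Suc k"]
      by (simp add: sigma_prefix_Suc m_assoc flip: m_assoc)
    also have "\<dots> = sigma_prefix (Suc j) \<otimes> \<sigma> k"
      using True assms(1) Suc.prems sigma_braid[of k] by (simp add: sigma_prefix_Suc m_assoc)
    finally show ?thesis .
  next
    case False
    then have "\<sigma> (Suc k) \<otimes> sigma_prefix (Suc j) = sigma_prefix j \<otimes> (\<sigma> k \<otimes> \<sigma> j)"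
      using assms(1) Suc by (simp add: sigma_prefix_Suc m_assoc flip: m_assoc)
    also have "\<dots> = sigma_prefix (Suc j) \<otimes> \<sigma> k"
      using False assms(1) Suc.prems sigma_commute[of k j] by (simp add: sigma_prefix_Suc m_assoc)
    finally show ?thesis .
  qed
qed simp

text \<open>
  \<open>twist j\<close> is the generator \<open>a_(j-1)\<close>, in which strand \<open>j\<close> makes a full turn around
  strand \<open>1\<close>. Indexing by the strand lets a braid of the strands \<open>2, \<dots>, n\<close> act on the
  indices through its permutation.
\<close>

definition twist :: "nat \<Rightarrow> bword set" where
  "twist j = a_elem n (j - 1)"

lemma twist_eq:
  assumes "1 \<le> k" "k < n"
  shows "twist (Suc k) = sigma_prefix k \<otimes> \<sigma> k \<otimes> \<sigma> k \<otimes> inv (sigma_prefix k)"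
proof -
  define U where "U = map (\<lambda>i. (i, True)) [1..<k]"
  have U: "valid_word n U"
    using assms valid_word_sigma_prefix by (simp add: U_def)
  have "a_word k = U @ [(k, True)] @ [(k, True)] @ word_inv U"
    by (simp add: a_word_def U_def word_inv_def rev_map)
  then have "twist (Suc k) = braid_class n U \<otimes> \<sigma> k \<otimes> \<sigma> k \<otimes> braid_class n (word_inv U)"
    using U assms by (simp add: twist_def a_elem_def sigma_def G_eq)
  then show ?thesis
    using U by (simp add: G_eq inv_braid_class sigma_prefix_def U_def)
qed

lemma twist_closed [simp]: "2 \<le> j \<Longrightarrow> j \<le> n \<Longrightarrow> twist j \<in> carrier G"
  using twist_eq[of "j - 1"] by simp

lemma twist_two: "twist 2 = \<sigma> 1 \<otimes> \<sigma> 1"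
  using twist_eq[of 1] two_le_n by (simp add: numeral_2_eq_2 m_assoc)

lemma braid_perm_twist [simp]: "2 \<le> j \<Longrightarrow> j \<le> n \<Longrightarrow> braid_perm (twist j) = id"
  using twist_eq[of "j - 1"] by (simp add: braid_perm_mult fun_eq_iff)

lemma sigma_conj_adjacent_twists:
  assumes "2 \<le> m" "m < n"
  shows "\<sigma> m \<otimes> twist (Suc m) \<otimes> inv (\<sigma> m) = twist m"
    and "inv (\<sigma> m) \<otimes> twist m \<otimes> \<sigma> m = twist (Suc m)"
    and "\<sigma> m \<otimes> twist m \<otimes> inv (\<sigma> m) = inv (twist m) \<otimes> twist (Suc m) \<otimes> twist m"
    and "inv (\<sigma> m) \<otimes> twist (Suc m) \<otimes> \<sigma> m = twist (Suc m) \<otimes> twist m \<otimes> inv (twist (Suc m))"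
proof -
  obtain k where k: "m = Suc k" "1 \<le> k"
    using assms(1) by (cases m) auto
  define w x y where "w = sigma_prefix k" and "x = \<sigma> k" and "y = \<sigma> m"
  have carrier: "w \<in> carrier G" "x \<in> carrier G" "y \<in> carrier G"
    using assms k by (simp_all add: w_def x_def y_def)
  have yw: "y \<otimes> w = w \<otimes> y" and inv_yw: "inv y \<otimes> w = w \<otimes> inv y"
    using assms k sigma_commute_sigma_prefix[of k m] intertwine_inv(2)[of y w y] carrier
    by (simp_all add: w_def y_def)
  have braid: "x \<otimes> y \<otimes> x = y \<otimes> x \<otimes> y"
    using assms k sigma_braid[of k] by (simp add: x_def y_def)
  have tw_m: "twist m = w \<otimes> (x \<otimes> x) \<otimes> inv w"
    using assms k twist_eq[of k] carrier by (simp add: w_def x_def m_assoc)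
  have tw_Suc_m: "twist (Suc m) = w \<otimes> (x \<otimes> (y \<otimes> y) \<otimes> inv x) \<otimes> inv w"
    using assms k twist_eq[of m] sigma_prefix_Suc[of k] carrier
    by (simp add: w_def x_def y_def m_assoc inv_mult_group)
  have conj: "inv y \<otimes> twist m \<otimes> y = twist (Suc m)"
    using conj_intertwine[of "inv y" "inv y" w "x \<otimes> x"] braid_relation_conj_square[OF _ _ braid]
      carrier inv_yw
    by (simp add: tw_m tw_Suc_m)
  have "twist (Suc m) \<otimes> twist m = w \<otimes> (x \<otimes> y \<otimes> y \<otimes> x) \<otimes> inv w"
    using carrier by (simp add: tw_m tw_Suc_m m_assoc)
  then have comm: "y \<otimes> (twist (Suc m) \<otimes> twist m) \<otimes> inv y = twist (Suc m) \<otimes> twist m"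
    using conj_intertwine[of y y w "x \<otimes> y \<otimes> y \<otimes> x"] braid_relation_commute[OF _ _ braid] carrier yw
    by simp
  have tw_carrier: "twist m \<in> carrier G" "twist (Suc m) \<in> carrier G"
    using assms by simp_all
  show "\<sigma> m \<otimes> twist (Suc m) \<otimes> inv (\<sigma> m) = twist m"
    using carrier tw_carrier by (simp add: m_assoc flip: conj y_def)
  show "inv (\<sigma> m) \<otimes> twist m \<otimes> \<sigma> m = twist (Suc m)"
    using conj by (simp add: y_def)
  show "\<sigma> m \<otimes> twist m \<otimes> inv (\<sigma> m) = inv (twist m) \<otimes> twist (Suc m) \<otimes> twist m"
    and "inv (\<sigma> m) \<otimes> twist (Suc m) \<otimes> \<sigma> m = twist (Suc m) \<otimes> twist m \<otimes> inv (twist (Suc m))"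
    using conj_of_commuting_product[OF carrier(3) tw_carrier conj comm] by (simp_all add: y_def)
qed

lemma sigma_conj_distant_twist:
  assumes "2 \<le> m" "m < n" "2 \<le> j" "j \<le> n" "j \<noteq> m" "j \<noteq> Suc m"
  shows "\<sigma> m \<otimes> twist j \<otimes> inv (\<sigma> m) = twist j"
proof -
  obtain i where i: "j = Suc i" "1 \<le> i" "i < n"
    using assms(3,4) by (cases j) auto
  define w where "w = sigma_prefix i"
  have carrier: "w \<in> carrier G" "\<sigma> i \<in> carrier G" "\<sigma> m \<in> carrier G"
    using assms i by (simp_all add: w_def)
  have tw: "twist j = w \<otimes> (\<sigma> i \<otimes> \<sigma> i) \<otimes> inv w"
    using twist_eq i carrier by (simp add: w_def m_assoc)
  consider (below) "Suc i < m" | (above) "m < i"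
    using assms i by linarith
  then show ?thesis
  proof cases
    case below
    have "\<sigma> m \<otimes> w = w \<otimes> \<sigma> m"
      using below assms(2) sigma_commute_sigma_prefix by (simp add: w_def)
    moreover have "\<sigma> m \<otimes> (\<sigma> i \<otimes> \<sigma> i) \<otimes> inv (\<sigma> m) = \<sigma> i \<otimes> \<sigma> i"
      using below assms(2) i sigma_commute[of i m] carrier by (simp add: conj_square_commuting)
    ultimately show ?thesis
      using conj_intertwine[of "\<sigma> m" "\<sigma> m" w "\<sigma> i \<otimes> \<sigma> i"] carrier by (simp add: tw)
  next
    case above
    obtain k where k: "m = Suc k" "1 \<le> k"
      using assms(1) by (cases m) auto
    then have "\<sigma> k \<in> carrier G"
      using assms(2) by simp
    have "\<sigma> m \<otimes> w = w \<otimes> \<sigma> k"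
      using above i k sigma_shift_sigma_prefix by (simp add: w_def)
    moreover have "\<sigma> k \<otimes> (\<sigma> i \<otimes> \<sigma> i) \<otimes> inv (\<sigma> k) = \<sigma> i \<otimes> \<sigma> i"
      using above i k sigma_commute[of k i] carrier by (simp add: conj_square_commuting)
    ultimately show ?thesis
      using conj_intertwine[of "\<sigma> m" "\<sigma> k" w "\<sigma> i \<otimes> \<sigma> i"] carrier \<open>\<sigma> k \<in> carrier G\<close>
      by (simp add: tw)
  qed
qed

lemma combed_eq_generate: "combed n = generate G (twist ` {2..n})"
proof -
  have "{2..n} = Suc ` {1..n - 1}"
    using two_le_n by (simp add: image_Suc_atLeastAtMost)
  then have "twist ` {2..n} = twist ` Suc ` {1..n - 1}"
    by (simp only:)
  also have "\<dots> = a_elem n ` {1..n - 1}"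
    unfolding image_comp by (simp add: comp_def twist_def del: image_Suc_atLeastAtMost)
  finally have "twist ` {2..n} = a_elem n ` {1..n - 1}" .
  then have "{a_elem n i | i. 1 \<le> i \<and> i \<le> n - 1} = twist ` {2..n}"
    by auto
  then show ?thesis
    by (simp add: combed_def G_eq)
qed

lemma twist_in_combed [simp]: "2 \<le> j \<Longrightarrow> j \<le> n \<Longrightarrow> twist j \<in> combed n"
  unfolding combed_eq_generate by (rule generate.incl) simp

lemma subgroup_combed: "subgroup (combed n) G"
  unfolding combed_eq_generate by (rule generate_is_subgroup) auto

lemma combed_closed: "P \<in> combed n \<Longrightarrow> P \<in> carrier G"
  using subgroup.mem_carrier[OF subgroup_combed] .

lemma subgroup_braid_perm_fixing: "subgroup {x \<in> carrier G. \<forall>j \<in> S. braid_perm x j = j} G"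
proof (rule subgroupI)
  show "inv x \<in> {x \<in> carrier G. \<forall>j \<in> S. braid_perm x j = j}"
    if "x \<in> {x \<in> carrier G. \<forall>j \<in> S. braid_perm x j = j}" for x
  proof -
    have "braid_perm (inv x) j = j" if "j \<in> S" for j
    proof -
      have "x \<in> carrier G" "braid_perm x j = j"
        using \<open>x \<in> _\<close> that by auto
      then show ?thesis
        using braid_perm_inv_apply(1)[of x j] by simp
    qed
    then show ?thesis
      using \<open>x \<in> _\<close> by simp
  qed
qed (auto simp: braid_perm_mult)

lemma braid_perm_combed: "P \<in> combed n \<Longrightarrow> braid_perm P = id"
proof -
  assume "P \<in> combed n"
  moreover have "combed n \<subseteq> {x \<in> carrier G. \<forall>j \<in> UNIV. braid_perm x j = j}"
    unfolding combed_eq_generate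
    by (rule generate_subgroup_incl[OF _ subgroup_braid_perm_fixing]) auto
  ultimately show ?thesis
    by (auto simp: fun_eq_iff)
qed

lemma sigma_conj_twist:
  assumes "2 \<le> m" "m < n" "g = \<sigma> m \<or> g = inv (\<sigma> m)" "2 \<le> j" "j \<le> n"
  shows "conjugate_in (combed n) (twist (transpose m (Suc m) j)) (g \<otimes> twist j \<otimes> inv g)"
proof -
  have carrier: "\<sigma> m \<in> carrier G" "twist m \<in> carrier G" "twist (Suc m) \<in> carrier G"
    "twist j \<in> carrier G"
    using assms by simp_all
  note refl = conjugate_in_refl[OF subgroup_combed]
  note table = sigma_conj_adjacent_twists[OF assms(1,2)]
  consider "j = m" "g = \<sigma> m" | "j = m" "g = inv (\<sigma> m)" | "j = Suc m" "g = \<sigma> m"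
    | "j = Suc m" "g = inv (\<sigma> m)" | "j \<noteq> m" "j \<noteq> Suc m"
    using assms(3) by blast
  then show ?thesis
  proof cases
    case 1
    then show ?thesis
      using table(3) carrier conjugate_inI[of "inv (twist m)" "combed n" "twist (Suc m)"] assms(1,2)
        subgroup.m_inv_closed[OF subgroup_combed] by simp
  next
    case 2
    then show ?thesis
      using table(2) carrier refl by simp
  next
    case 3
    then show ?thesis
      using table(1) carrier refl by simp
  next
    case 4
    then show ?thesis
      using table(4) carrier conjugate_inI[of "twist (Suc m)" "combed n" "twist m"] assms(1,2)
      by simp
  next
    case 5
    then have "\<sigma> m \<otimes> twist j \<otimes> inv (\<sigma> m) = twist j"
      using sigma_conj_distant_twist assms by simp
    then have "g \<otimes> twist j \<otimes> inv g = twist j"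
      using assms(3) carrier inv_conj_fixed by auto
    then show ?thesis
      using 5 carrier refl by simp
  qed
qed

lemma sigma_normalizes_combed:
  assumes "2 \<le> m" "m < n" "g = \<sigma> m \<or> g = inv (\<sigma> m)" "P \<in> combed n"
  shows "g \<otimes> P \<otimes> inv g \<in> combed n"
proof -
  have "g \<otimes> s \<otimes> inv g \<in> generate G (twist ` {2..n})" if s: "s \<in> twist ` {2..n}" for s
  proof -
    obtain j where j: "s = twist j" "2 \<le> j" "j \<le> n"
      using s by auto
    then have "twist (transpose m (Suc m) j) \<in> combed n"
      using assms(1,2) by (simp add: transpose_def)
    then show ?thesis
      using sigma_conj_twist[OF assms(1-3) j(2,3)] conjugate_in_mem[OF subgroup_combed] j(1)
      by (simp add: combed_eq_generate)
  qed
  moreover have "g \<in> carrier G" "twist ` {2..n} \<subseteq> carrier G"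
    using assms(1-3) by auto
  ultimately show ?thesis
    using generate_conj_closed[of g "twist ` {2..n}" P] assms(4) by (simp add: combed_eq_generate)
qed

definition tail_braids :: "bword set set" where
  "tail_braids = generate G (\<sigma> ` {2..<n})"

lemma subgroup_tail_braids: "subgroup tail_braids G"
  unfolding tail_braids_def by (rule generate_is_subgroup) auto

lemma tail_braids_closed: "\<beta> \<in> tail_braids \<Longrightarrow> \<beta> \<in> carrier G"
  using subgroup.mem_carrier[OF subgroup_tail_braids] .

lemma sigma_in_tail_braids: "2 \<le> m \<Longrightarrow> m < n \<Longrightarrow> \<sigma> m \<in> tail_braids"
  unfolding tail_braids_def by (rule generate.incl) simp

lemma braid_perm_tail_braids: "\<beta> \<in> tail_braids \<Longrightarrow> braid_perm \<beta> 1 = 1"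
proof -
  assume "\<beta> \<in> tail_braids"
  moreover have "tail_braids \<subseteq> {x \<in> carrier G. \<forall>j \<in> {1}. braid_perm x j = j}"
    unfolding tail_braids_def
    by (rule generate_subgroup_incl[OF _ subgroup_braid_perm_fixing]) auto
  ultimately show ?thesis
    by auto
qed

lemma tail_braids_normalize_combed:
  assumes "\<beta> \<in> tail_braids" "P \<in> combed n"
  shows "\<beta> \<otimes> P \<otimes> inv \<beta> \<in> combed n"
proof (rule generate_normalizes[OF subgroup_combed _ _ _ assms(2)])
  show "\<sigma> ` {2..<n} \<subseteq> carrier G"
    by auto
  show "\<beta> \<in> generate G (\<sigma> ` {2..<n})"
    using assms(1) by (simp add: tail_braids_def)
  show "t \<otimes> Q \<otimes> inv t \<in> combed n \<and> inv t \<otimes> Q \<otimes> t \<in> combed n"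
    if "t \<in> \<sigma> ` {2..<n}" "Q \<in> combed n" for t Q
    using that sigma_normalizes_combed[of _ "inv t" Q] sigma_normalizes_combed[of _ t Q] by auto
qed

definition conjugates_twists :: "bword set \<Rightarrow> bool" where
  "conjugates_twists \<beta> \<longleftrightarrow> (\<forall>j \<in> {2..n}. braid_perm \<beta> j \<in> {2..n}
      \<and> conjugate_in (combed n) (twist (braid_perm \<beta> j)) (\<beta> \<otimes> twist j \<otimes> inv \<beta>))"

lemma conjugates_twists_sigma:
  assumes "2 \<le> m" "m < n" "g = \<sigma> m \<or> g = inv (\<sigma> m)"
  shows "conjugates_twists g"
proof -
  have "braid_perm g = transpose m (Suc m)"
    using assms by auto
  then show ?thesis
    using assms sigma_conj_twist[OF assms] by (auto simp: conjugates_twists_def transpose_def)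
qed

lemma conjugates_twists_mult:
  assumes "\<beta> \<in> tail_braids" "\<gamma> \<in> carrier G" "conjugates_twists \<beta>" "conjugates_twists \<gamma>"
  shows "conjugates_twists (\<beta> \<otimes> \<gamma>)"
  unfolding conjugates_twists_def
proof
  fix j
  assume j: "j \<in> {2..n}"
  let ?j' = "braid_perm \<gamma> j"
  have \<beta>: "\<beta> \<in> carrier G"
    using assms(1) tail_braids_closed by simp
  have j': "?j' \<in> {2..n}" "conjugate_in (combed n) (twist ?j') (\<gamma> \<otimes> twist j \<otimes> inv \<gamma>)"
    using assms(4) j by (simp_all add: conjugates_twists_def)
  have j'': "braid_perm \<beta> ?j' \<in> {2..n}"
    "conjugate_in (combed n) (twist (braid_perm \<beta> ?j')) (\<beta> \<otimes> twist ?j' \<otimes> inv \<beta>)"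
    using assms(3) j'(1) by (simp_all add: conjugates_twists_def)
  have "conjugate_in (combed n) (\<beta> \<otimes> twist ?j' \<otimes> inv \<beta>) (\<beta> \<otimes> (\<gamma> \<otimes> twist j \<otimes> inv \<gamma>) \<otimes> inv \<beta>)"
    using conjugate_in_conj[OF subgroup_combed \<beta> _ _ j'(2)] j'(1)
      tail_braids_normalize_combed[OF assms(1)] by simp
  then have "conjugate_in (combed n) (twist (braid_perm \<beta> ?j')) (\<beta> \<otimes> (\<gamma> \<otimes> twist j \<otimes> inv \<gamma>) \<otimes> inv \<beta>)"
    using conjugate_in_trans[OF subgroup_combed _ j''(2)] j''(1) by simp
  moreover have "\<beta> \<otimes> (\<gamma> \<otimes> twist j \<otimes> inv \<gamma>) \<otimes> inv \<beta> = \<beta> \<otimes> \<gamma> \<otimes> twist j \<otimes> inv (\<beta> \<otimes> \<gamma>)"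
    using \<beta> assms(2) j by (simp add: m_assoc inv_mult_group)
  ultimately show "braid_perm (\<beta> \<otimes> \<gamma>) j \<in> {2..n}
      \<and> conjugate_in (combed n) (twist (braid_perm (\<beta> \<otimes> \<gamma>) j)) (\<beta> \<otimes> \<gamma> \<otimes> twist j \<otimes> inv (\<beta> \<otimes> \<gamma>))"
    using j''(1) \<beta> assms(2) by (simp add: braid_perm_mult)
qed

lemma tail_braids_conjugates_twists:
  assumes "\<beta> \<in> tail_braids"
  shows "conjugates_twists \<beta>"
proof -
  from assms have "\<beta> \<in> generate G (\<sigma> ` {2..<n})"
    by (simp add: tail_braids_def)
  then show ?thesis
  proof (induction rule: generate.induct)
    case one
    then show ?case
      using conjugate_in_refl[OF subgroup_combed] by (simp add: conjugates_twists_def)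
  next
    case (eng \<beta> \<gamma>)
    have "\<sigma> ` {2..<n} \<subseteq> carrier G"
      by auto
    then have "\<gamma> \<in> carrier G"
      using eng.hyps(2) by (rule generate_in_carrier)
    then show ?case
      using eng conjugates_twists_mult by (simp add: tail_braids_def)
  qed (auto intro: conjugates_twists_sigma)
qed

section \<open>The stabiliser of the first strand\<close>

definition strand_coset :: "nat \<Rightarrow> bword set set" where
  "strand_coset j = {inv (sigma_prefix j) \<otimes> P \<otimes> \<beta> | P \<beta>. P \<in> combed n \<and> \<beta> \<in> tail_braids}"

lemma strand_cosetI:
  "P \<in> combed n \<Longrightarrow> \<beta> \<in> tail_braids \<Longrightarrow> x = inv (sigma_prefix j) \<otimes> P \<otimes> \<beta> \<Longrightarrow> x \<in> strand_coset j"
  by (auto simp: strand_coset_def)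

lemma strand_coset_mult:
  assumes "j \<le> n" "x \<in> strand_coset j" "P \<in> combed n" "\<beta> \<in> tail_braids"
  shows "x \<otimes> P \<otimes> \<beta> \<in> strand_coset j"
proof -
  obtain P' \<beta>' where x: "P' \<in> combed n" "\<beta>' \<in> tail_braids" "x = inv (sigma_prefix j) \<otimes> P' \<otimes> \<beta>'"
    using assms(2) by (auto simp: strand_coset_def)
  have carrier: "P \<in> carrier G" "P' \<in> carrier G" "\<beta> \<in> carrier G" "\<beta>' \<in> carrier G"
    using assms(3,4) x(1,2) combed_closed tail_braids_closed by simp_all
  have "x \<otimes> P \<otimes> \<beta> = inv (sigma_prefix j) \<otimes> (P' \<otimes> (\<beta>' \<otimes> P \<otimes> inv \<beta>')) \<otimes> (\<beta>' \<otimes> \<beta>)"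
    using x(3) carrier assms(1) by (simp add: m_assoc)
  moreover have "P' \<otimes> (\<beta>' \<otimes> P \<otimes> inv \<beta>') \<in> combed n" "\<beta>' \<otimes> \<beta> \<in> tail_braids"
    using x(1,2) assms(3,4) tail_braids_normalize_combed subgroup.m_closed[OF subgroup_combed]
      subgroup.m_closed[OF subgroup_tail_braids] by simp_all
  ultimately show ?thesis
    by (rule strand_cosetI[rotated 2])
qed

lemma sigma_mult_inv_sigma_prefix:
  assumes "1 \<le> i" "i < n" "1 \<le> j" "j \<le> n"
  shows "\<sigma> i \<otimes> inv (sigma_prefix j) \<in> strand_coset (transpose i (Suc i) j)"
proof -
  have one: "\<one> \<in> combed n" "\<one> \<in> tail_braids"
    using subgroup.one_closed[OF subgroup_combed] subgroup.one_closed[OF subgroup_tail_braids] .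
  have carrier: "\<sigma> i \<in> carrier G" "sigma_prefix j \<in> carrier G"
    using assms by simp_all
  consider "j < i" | "j = i" | "j = Suc i" | "Suc i < j"
    by linarith
  then show ?thesis
  proof cases
    case 1
    then have "\<sigma> i \<otimes> inv (sigma_prefix j) = inv (sigma_prefix (transpose i (Suc i) j)) \<otimes> \<one> \<otimes> \<sigma> i"
      using assms(2) carrier sigma_commute_sigma_prefix intertwine_inv(1) by simp
    moreover have "\<sigma> i \<in> tail_braids"
      using 1 assms by (simp add: sigma_in_tail_braids)
    ultimately show ?thesis
      by (intro strand_cosetI[OF one(1)])
  next
    case 2
    have "\<sigma> i \<otimes> inv (sigma_prefix i) = inv (sigma_prefix i \<otimes> \<sigma> i)
        \<otimes> (sigma_prefix i \<otimes> \<sigma> i \<otimes> \<sigma> i \<otimes> inv (sigma_prefix i)) \<otimes> \<one>"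
      using assms by (simp add: m_assoc inv_mult_group)
    then have "\<sigma> i \<otimes> inv (sigma_prefix j)
        = inv (sigma_prefix (transpose i (Suc i) j)) \<otimes> twist (Suc i) \<otimes> \<one>"
      using 2 assms by (simp only: transpose_apply_first sigma_prefix_Suc twist_eq)
    moreover have "twist (Suc i) \<in> combed n"
      using assms by simp
    ultimately show ?thesis
      by (intro strand_cosetI[OF _ one(2)])
  next
    case 3
    then have "\<sigma> i \<otimes> inv (sigma_prefix j) = inv (sigma_prefix (transpose i (Suc i) j)) \<otimes> \<one> \<otimes> \<one>"
      using assms carrier by (simp add: sigma_prefix_Suc inv_mult_group)
    then show ?thesis
      by (rule strand_cosetI[OF one])
  next
    case 4
    then have "\<sigma> i \<otimes> inv (sigma_prefix j)
        = inv (sigma_prefix (transpose i (Suc i) j)) \<otimes> \<one> \<otimes> \<sigma> (Suc i)"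
      using assms carrier sigma_shift_sigma_prefix[of i j] intertwine_inv(1)[of "\<sigma> (Suc i)"] by simp
    moreover have "\<sigma> (Suc i) \<in> tail_braids"
      using 4 assms by (simp add: sigma_in_tail_braids)
    ultimately show ?thesis
      by (intro strand_cosetI[OF one(1)])
  qed
qed

lemma inv_sigma_mult_inv_sigma_prefix:
  assumes "1 \<le> i" "i < n" "1 \<le> j" "j \<le> n"
  shows "inv (\<sigma> i) \<otimes> inv (sigma_prefix j) \<in> strand_coset (transpose i (Suc i) j)"
proof -
  have one: "\<one> \<in> combed n" "\<one> \<in> tail_braids"
    using subgroup.one_closed[OF subgroup_combed] subgroup.one_closed[OF subgroup_tail_braids] .
  have carrier: "\<sigma> i \<in> carrier G" "sigma_prefix j \<in> carrier G"
    using assms by simp_all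
  consider "j < i" | "j = i" | "j = Suc i" | "Suc i < j"
    by linarith
  then show ?thesis
  proof cases
    case 1
    then have "inv (\<sigma> i) \<otimes> inv (sigma_prefix j)
        = inv (sigma_prefix (transpose i (Suc i) j)) \<otimes> \<one> \<otimes> inv (\<sigma> i)"
      using assms(2) carrier sigma_commute_sigma_prefix intertwine_inv_inv by simp
    moreover have "inv (\<sigma> i) \<in> tail_braids"
      using 1 assms sigma_in_tail_braids subgroup.m_inv_closed[OF subgroup_tail_braids] by simp
    ultimately show ?thesis
      by (intro strand_cosetI[OF one(1)])
  next
    case 2
    then have "inv (\<sigma> i) \<otimes> inv (sigma_prefix j)
        = inv (sigma_prefix (transpose i (Suc i) j)) \<otimes> \<one> \<otimes> \<one>"
      using assms carrier by (simp add: sigma_prefix_Suc inv_mult_group)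
    then show ?thesis
      by (rule strand_cosetI[OF one])
  next
    case 3
    have "inv (\<sigma> i) \<otimes> inv (sigma_prefix i \<otimes> \<sigma> i) = inv (sigma_prefix i)
        \<otimes> inv (sigma_prefix i \<otimes> \<sigma> i \<otimes> \<sigma> i \<otimes> inv (sigma_prefix i)) \<otimes> \<one>"
      using assms by (simp add: m_assoc inv_mult_group)
    then have "inv (\<sigma> i) \<otimes> inv (sigma_prefix j)
        = inv (sigma_prefix (transpose i (Suc i) j)) \<otimes> inv (twist (Suc i)) \<otimes> \<one>"
      using 3 assms by (simp only: transpose_apply_second sigma_prefix_Suc twist_eq)
    moreover have "inv (twist (Suc i)) \<in> combed n"
      using assms subgroup.m_inv_closed[OF subgroup_combed] by simp
    ultimately show ?thesis
      by (intro strand_cosetI[OF _ one(2)])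
  next
    case 4
    then have "inv (\<sigma> i) \<otimes> inv (sigma_prefix j)
        = inv (sigma_prefix (transpose i (Suc i) j)) \<otimes> \<one> \<otimes> inv (\<sigma> (Suc i))"
      using assms carrier sigma_shift_sigma_prefix[of i j] intertwine_inv_inv[of "\<sigma> (Suc i)"]
      by simp
    moreover have "inv (\<sigma> (Suc i)) \<in> tail_braids"
      using 4 assms sigma_in_tail_braids subgroup.m_inv_closed[OF subgroup_tail_braids] by simp
    ultimately show ?thesis
      by (intro strand_cosetI[OF one(1)])
  qed
qed

lemma strand_coset_sigma_mult:
  assumes "1 \<le> i" "i < n" "g = \<sigma> i \<or> g = inv (\<sigma> i)" "1 \<le> j" "j \<le> n" "x \<in> strand_coset j"
  shows "g \<otimes> x \<in> strand_coset (transpose i (Suc i) j)"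
proof -
  obtain P \<beta> where x: "P \<in> combed n" "\<beta> \<in> tail_braids" "x = inv (sigma_prefix j) \<otimes> P \<otimes> \<beta>"
    using assms(6) by (auto simp: strand_coset_def)
  have "g \<otimes> x = g \<otimes> inv (sigma_prefix j) \<otimes> P \<otimes> \<beta>"
    using x assms combed_closed tail_braids_closed by (auto simp: m_assoc)
  moreover have "g \<otimes> inv (sigma_prefix j) \<in> strand_coset (transpose i (Suc i) j)"
    using assms(3) sigma_mult_inv_sigma_prefix[OF assms(1,2,4,5)]
      inv_sigma_mult_inv_sigma_prefix[OF assms(1,2,4,5)] by auto
  moreover have "transpose i (Suc i) j \<le> n"
    using assms(2,5) by (simp add: transpose_def)
  ultimately show ?thesis
    using strand_coset_mult x(1,2) by simp
qed

lemma braid_class_Cons: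
  assumes "valid_word n ((i, e) # w)"
  shows "braid_class n ((i, e) # w) = (if e then \<sigma> i else inv (\<sigma> i)) \<otimes> braid_class n w"
proof -
  have "braid_class n ((i, e) # w) = braid_class n [(i, e)] \<otimes> braid_class n w"
    using assms by (simp add: G_eq)
  then show ?thesis
  proof (cases e)
    case True
    then show ?thesis
      using \<open>braid_class n ((i, e) # w) = _\<close> by (simp add: sigma_def)
  next
    case False
    then show ?thesis
      using \<open>braid_class n ((i, e) # w) = _\<close> assms inv_sigma by simp
  qed
qed

lemma braid_in_strand_coset:
  assumes "x \<in> carrier G"
  shows "\<exists>j \<in> {1..n}. x \<in> strand_coset j"
proof -
  obtain w where w: "valid_word n w" "x = braid_class n w"
    using assms by (auto simp: G_eq carrier_braid_group)
  have "\<exists>j \<in> {1..n}. braid_class n w \<in> strand_coset j"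
    using w(1)
  proof (induction w)
    case Nil
    have "braid_class n [] = \<one>"
      by (simp add: G_eq one_braid_group)
    then have "braid_class n [] = inv (sigma_prefix 1) \<otimes> \<one> \<otimes> \<one>"
      by simp
    then have "braid_class n [] \<in> strand_coset 1"
      using subgroup.one_closed[OF subgroup_combed] subgroup.one_closed[OF subgroup_tail_braids]
      by (rule strand_cosetI[rotated 2])
    then show ?case
      using two_le_n by auto
  next
    case (Cons l w)
    obtain i e where l: "l = (i, e)"
      by fastforce
    have i: "1 \<le> i" "i < n" and "valid_word n w"
      using Cons.prems by (simp_all add: l)
    then obtain j where j: "j \<in> {1..n}" "braid_class n w \<in> strand_coset j"
      using Cons.IH by blast
    have "braid_class n (l # w) \<in> strand_coset (transpose i (Suc i) j)"
      using strand_coset_sigma_mult[OF i _ _ _ j(2)] braid_class_Cons[of i e w] Cons.prems j(1)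
      by (cases e) (simp_all add: l)
    moreover have "transpose i (Suc i) j \<in> {1..n}"
      using i j(1) by (auto simp: transpose_def)
    ultimately show ?case
      by blast
  qed
  then show ?thesis
    using w(2) by simp
qed

lemma braid_perm_strand_coset:
  assumes "1 \<le> j" "j \<le> n" "x \<in> strand_coset j"
  shows "braid_perm x 1 = j"
proof -
  obtain P \<beta> where x: "P \<in> combed n" "\<beta> \<in> tail_braids" "x = inv (sigma_prefix j) \<otimes> P \<otimes> \<beta>"
    using assms(3) by (auto simp: strand_coset_def)
  have "braid_perm x 1 = braid_perm (inv (sigma_prefix j)) (braid_perm (sigma_prefix j) j)"
    using x assms(1,2) combed_closed tail_braids_closed braid_perm_tail_braids[OF x(2)]
    by (simp add: braid_perm_mult braid_perm_combed braid_perm_sigma_prefix)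
  then show ?thesis
    using assms(2) by simp
qed

lemma stabilizer_decomposition:
  assumes "x \<in> carrier G" "braid_perm x 1 = 1"
  obtains P \<beta> where "P \<in> combed n" "\<beta> \<in> tail_braids" "x = P \<otimes> \<beta>"
proof -
  obtain j where j: "j \<in> {1..n}" "x \<in> strand_coset j"
    using braid_in_strand_coset[OF assms(1)] by blast
  then have "j = 1"
    using braid_perm_strand_coset assms(2) by force
  then obtain P \<beta> where "P \<in> combed n" "\<beta> \<in> tail_braids" "x = inv \<one> \<otimes> P \<otimes> \<beta>"
    using j(2) by (auto simp: strand_coset_def)
  then show ?thesis
    using that combed_closed by simp
qed

lemma stabilizer_conj_twist_two:
  assumes "x \<in> carrier G" "braid_perm x 1 = 1"
  shows "conjugate_in (combed n) (twist (braid_perm x 2)) (x \<otimes> twist 2 \<otimes> inv x)"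
proof -
  obtain P \<beta> where P\<beta>: "P \<in> combed n" "\<beta> \<in> tail_braids" "x = P \<otimes> \<beta>"
    using stabilizer_decomposition[OF assms] .
  have carrier: "P \<in> carrier G" "\<beta> \<in> carrier G" "twist 2 \<in> carrier G"
    using P\<beta> combed_closed tail_braids_closed two_le_n by simp_all
  have "braid_perm x 2 = braid_perm \<beta> 2"
    using P\<beta> carrier by (simp add: braid_perm_mult braid_perm_combed)
  then have "braid_perm x 2 \<in> {2..n}"
    and \<beta>_conj: "conjugate_in (combed n) (twist (braid_perm x 2)) (\<beta> \<otimes> twist 2 \<otimes> inv \<beta>)"
    using tail_braids_conjugates_twists[OF P\<beta>(2)] two_le_n by (simp_all add: conjugates_twists_def)
  then have "twist (braid_perm x 2) \<in> carrier G"
    by simp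
  moreover have "x \<otimes> twist 2 \<otimes> inv x = P \<otimes> (\<beta> \<otimes> twist 2 \<otimes> inv \<beta>) \<otimes> inv P"
    using P\<beta>(3) carrier by (simp add: m_assoc inv_mult_group)
  then have "conjugate_in (combed n) (\<beta> \<otimes> twist 2 \<otimes> inv \<beta>) (x \<otimes> twist 2 \<otimes> inv x)"
    using conjugate_inI[OF P\<beta>(1)] by (simp only:)
  ultimately show ?thesis
    using conjugate_in_trans[OF subgroup_combed _ \<beta>_conj] by blast
qed

section \<open>Half-twists\<close>

lemma half_twist_iff: "half_twist n h \<longleftrightarrow> (\<exists>g \<in> carrier G. h = g \<otimes> \<sigma> 1 \<otimes> inv g)"
  by (simp add: half_twist_def G_eq)

lemma half_twist_normal_form:
  assumes "half_twist n h" "braid_perm h = transpose 1 n"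
  obtains x where "x \<in> carrier G" "braid_perm x 1 = 1" "braid_perm x 2 = n" "h = x \<otimes> \<sigma> 1 \<otimes> inv x"
proof -
  obtain g where g: "g \<in> carrier G" "h = g \<otimes> \<sigma> 1 \<otimes> inv g"
    using assms(1) half_twist_iff by blast
  have \<sigma>1: "\<sigma> 1 \<in> carrier G" "braid_perm (\<sigma> 1) = transpose 1 2"
    using two_le_n by (simp_all add: numeral_2_eq_2)
  have "braid_perm h (braid_perm g 1) = braid_perm g 2"
    using g \<sigma>1 by (simp add: braid_perm_mult)
  moreover have "braid_perm g 1 \<noteq> braid_perm g 2"
  proof
    assume "braid_perm g 1 = braid_perm g 2"
    then have "braid_perm (inv g) (braid_perm g 1) = braid_perm (inv g) (braid_perm g 2)"
      by simp
    then show False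
      using g(1) by simp
  qed
  ultimately consider "braid_perm g 1 = 1" "braid_perm g 2 = n"
    | "braid_perm g 1 = n" "braid_perm g 2 = 1"
    using transpose_moves assms(2) by metis
  then show ?thesis
  proof cases
    case 1
    then show ?thesis
      using that g by blast
  next
    case 2
    have "h = (g \<otimes> \<sigma> 1) \<otimes> \<sigma> 1 \<otimes> inv (g \<otimes> \<sigma> 1)"
      using g \<sigma>1 by (simp add: m_assoc inv_mult_group)
    moreover have "braid_perm (g \<otimes> \<sigma> 1) 1 = 1" "braid_perm (g \<otimes> \<sigma> 1) 2 = n"
      using 2 g \<sigma>1 by (simp_all add: braid_perm_mult)
    ultimately show ?thesis
      using that g \<sigma>1 by blast
  qed
qed

lemma half_twist_square_conj:
  assumes "half_twist n h" "braid_perm h = transpose 1 n"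
  shows "conjugate_in (combed n) (twist n) (h \<otimes> h)"
proof -
  obtain x where x: "x \<in> carrier G" "braid_perm x 1 = 1" "braid_perm x 2 = n" "h = x \<otimes> \<sigma> 1 \<otimes> inv x"
    using half_twist_normal_form[OF assms] .
  have "h \<otimes> h = x \<otimes> twist 2 \<otimes> inv x"
    using x two_le_n by (simp add: twist_two m_assoc)
  then show ?thesis
    using stabilizer_conj_twist_two[OF x(1,2)] x(3) by simp
qed

lemma sigma_conj_sigma_one: "1 \<le> i \<Longrightarrow> i < n \<Longrightarrow> \<exists>z \<in> carrier G. \<sigma> i = z \<otimes> \<sigma> 1 \<otimes> inv z"
proof (induction i)
  case (Suc i)
  show ?case
  proof (cases "i = 0")
    case True
    then show ?thesis
      using Suc.prems by (intro bexI[of _ \<one>]) simp_all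
  next
    case False
    then obtain z where z: "z \<in> carrier G" "\<sigma> i = z \<otimes> \<sigma> 1 \<otimes> inv z"
      using Suc by auto
    have carrier: "\<sigma> i \<in> carrier G" "\<sigma> (Suc i) \<in> carrier G" "\<sigma> 1 \<in> carrier G"
      using Suc.prems False by simp_all
    have "\<sigma> (Suc i) = (\<sigma> i \<otimes> \<sigma> (Suc i)) \<otimes> \<sigma> i \<otimes> inv (\<sigma> i \<otimes> \<sigma> (Suc i))"
      using braid_relation_conjugate[OF carrier(1,2)] sigma_braid[of i] Suc.prems False by simp
    also have "\<dots> = (\<sigma> i \<otimes> \<sigma> (Suc i) \<otimes> z) \<otimes> \<sigma> 1 \<otimes> inv (\<sigma> i \<otimes> \<sigma> (Suc i) \<otimes> z)"
      using z carrier by (simp add: m_assoc inv_mult_group)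
    finally show ?thesis
      using z carrier by (intro bexI[of _ "\<sigma> i \<otimes> \<sigma> (Suc i) \<otimes> z"]) simp_all
  qed
qed simp

lemma half_twist_square_root:
  assumes "Q \<in> combed n"
  obtains h where "h \<in> carrier G" "half_twist n h" "braid_perm h = transpose 1 n"
    "h \<otimes> h = Q \<otimes> twist n \<otimes> inv Q"
proof -
  define m where "m = n - 1"
  have m: "1 \<le> m" "m < n" "Suc m = n"
    using two_le_n by (auto simp: m_def)
  define w where "w = Q \<otimes> sigma_prefix m"
  have carrier: "w \<in> carrier G" "Q \<in> carrier G" "sigma_prefix m \<in> carrier G" "\<sigma> m \<in> carrier G"
    using assms m combed_closed by (simp_all add: w_def)
  define h where "h = w \<otimes> \<sigma> m \<otimes> inv w"
  obtain z where z: "z \<in> carrier G" "\<sigma> m = z \<otimes> \<sigma> 1 \<otimes> inv z"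
    using sigma_conj_sigma_one[OF m(1,2)] by blast
  have "h = (w \<otimes> z) \<otimes> \<sigma> 1 \<otimes> inv (w \<otimes> z)"
    using z carrier two_le_n by (simp add: h_def m_assoc inv_mult_group)
  then have "half_twist n h"
    using half_twist_iff carrier z by blast
  moreover have "braid_perm h = transpose 1 n"
  proof -
    have "braid_perm w = braid_perm (sigma_prefix m)"
      using assms carrier by (simp add: w_def braid_perm_mult braid_perm_combed)
    then have "braid_perm w m = 1" "braid_perm w n = n"
      using m braid_perm_sigma_prefix[of m] by simp_all
    moreover have "braid_perm h = braid_perm w \<circ> transpose m n \<circ> braid_perm (inv w)"
      using carrier m by (simp add: h_def braid_perm_mult)
    ultimately show ?thesis
      using transpose_conj[of "braid_perm (inv w)" "braid_perm w"] carrier by simp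
  qed
  moreover have "h \<otimes> h = Q \<otimes> twist n \<otimes> inv Q"
    using twist_eq[OF m(1,2)] m carrier by (simp add: h_def w_def m_assoc inv_mult_group)
  moreover have "h \<in> carrier G"
    using carrier by (simp add: h_def)
  ultimately show ?thesis
    using that by blast
qed

lemma half_twist_square_iff:
  "(\<exists>h \<in> carrier G. half_twist n h \<and> braid_perm h = transpose 1 n \<and> y = h \<otimes> h)
    \<longleftrightarrow> conjugate_in (combed n) (twist n) y"
proof
  assume "\<exists>h \<in> carrier G. half_twist n h \<and> braid_perm h = transpose 1 n \<and> y = h \<otimes> h"
  then show "conjugate_in (combed n) (twist n) y"
    using half_twist_square_conj by blast
next
  assume "conjugate_in (combed n) (twist n) y"
  then obtain Q where "Q \<in> combed n" "y = Q \<otimes> twist n \<otimes> inv Q"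
    unfolding conjugate_in_def by blast
  then show "\<exists>h \<in> carrier G. half_twist n h \<and> braid_perm h = transpose 1 n \<and> y = h \<otimes> h"
    using half_twist_square_root by metis
qed

lemma half_twist_power_iff:
  fixes k :: nat
  shows "(\<exists>h \<in> carrier G. half_twist n h \<and> braid_perm h = transpose 1 n \<and> b = h [^] (2 * k))
    \<longleftrightarrow> b \<in> combed n \<and> (\<exists>P \<in> combed n. b = inv P \<otimes> (a_elem n (n - 1) [^] k) \<otimes> P)"
proof -
  have square_pow: "h [^] (2 * k) = (h \<otimes> h) [^] k" if "h \<in> carrier G" for h
    using that nat_pow_pow[of h 2 k] by (simp add: numeral_2_eq_2)
  have "(\<exists>h \<in> carrier G. half_twist n h \<and> braid_perm h = transpose 1 n \<and> b = h [^] (2 * k))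
      \<longleftrightarrow> (\<exists>y. conjugate_in (combed n) (twist n) y \<and> b = y [^] k)"
    using half_twist_square_iff square_pow by (metis (no_types, lifting))
  also have "\<dots> \<longleftrightarrow> conjugate_in (combed n) (twist n [^] k) b"
    using conjugate_in_nat_pow_iff[OF subgroup_combed] two_le_n by simp
  also have "\<dots> \<longleftrightarrow> b \<in> combed n \<and> (\<exists>P \<in> combed n. b = inv P \<otimes> twist n [^] k \<otimes> P)"
    using conjugate_in_iff_inv[OF subgroup_combed] subgroup_nat_pow_closed[OF subgroup_combed]
      two_le_n
    by simp
  finally show ?thesis
    by (simp add: twist_def)
qed

end

theorem theorem3p6:
  fixes n k :: nat and b :: "bword set"
  assumes "n \<ge> 2" and "k \<ge> 1" and "b \<in> carrier (braid_group n)"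
  shows "(\<exists>h \<in> carrier (braid_group n). half_twist n h \<and> braid_perm h = transpose 1 n
            \<and> b = h [^]\<^bsub>braid_group n\<^esub> (2 * k))
     \<longleftrightarrow> (b \<in> combed n \<and>
          (\<exists>P \<in> combed n. b = inv\<^bsub>braid_group n\<^esub> P \<otimes>\<^bsub>braid_group n\<^esub>
                (a_elem n (n - 1) [^]\<^bsub>braid_group n\<^esub> k) \<otimes>\<^bsub>braid_group n\<^esub> P))"
proof -
  interpret braids "braid_group n" n
    by (intro braids.intro braids_axioms.intro group_braid_group refl assms(1))
  show ?thesis
    by (rule half_twist_power_iff)
qed

end
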